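(* Fix $p\in(0,1/2)$ and $\delta>0$. Let $D_0=D_0(p)$ and $K=K(p)$ be constants with the following property: for all integers $t\ge 2$, all $D\ge D_0$, with $d=D^2t^2$, and every $1\le r\le t$, \[ \mathbb{P}\big(H(r,d,p)\text{ is a clique}\big)\le p^{\binom{r}{2}}\exp\!\left(-\frac{a^3}{p^3\sqrt d}\binom{r}{3}+K\frac{r^3}{D\sqrt d}\right), \] \[ \mathbb{P}\big(H(r,d,p)\text{ is an independent set}\big)\le (1-p)^{\binom{r}{2}}\exp\!\left(\frac{a^3}{(1-p)^3\sqrt d}\binom{r}{3}+K\frac{r^3}{D\sqrt d}\right). \] Fix $D\ge D_0$, and for each $t\ge2$ set $d=D^2t^2$. Define \[ \kappa(p)=\frac{a^3}{6p^3},\qquad \lambda(p)=\frac{a^3}{6(1-p)^3},\qquad m=-\tfrac12\log p+\frac{\kappa(p)}{D}-\frac{K}{D^2}-\delta, \] and $M=\lfloor e^{mt}\rfloor$. Let $H=H(M,d,p)$. Then, as $t\to\infty$, $\mathbb{P}(H\text{ is }K_t\text{-free})=1-o(1)$, and if $v_1,\dots,v_t$ are i.i.d. uniform vertices of $[M]$ (with replacement), independent of $H$, \[ \mathbb{P}\big(\{v_1,\dots,v_t\}\text{ is independent in }H\big)\le \exp\big(-\alpha(p,D)t^2+o(t^2)\big), \] where \[ \alpha(p,D)=\min_{\theta\in[0,1]}\left((1-\theta)\Big(-\tfrac12\log p+\tfrac{\kappa(p)}{D}\Big)-\frac{\theta^2}{2}\log(1-p)-\frac{\lambda(p)}{D}\theta^3-(2-\theta)\frac{K}{D^2}\right)-\delta.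 \] Consequently $c_{t,t}\le \exp(-\alpha(p,D)t^2+o(t^2))$.
   Context: Spherical random geometric graph $H(M,d,p)$: for integers $M,d\ge1$ and $p\in(0,1/2)$, let $u_1,\dots,u_M$ be i.i.d. uniform points on the unit sphere $S^{d-1}\subset\mathbb{R}^d$, let $\tau=\tau(d,p)$ be the unique real number with $\mathbb{P}(\langle u,u'\rangle<\tau)=p$ for independent uniform $u,u'$ on $S^{d-1}$, and let $H(M,d,p)$ be the graph on vertex set $[M]$ with $ij$ an edge iff $\langle u_i,u_j\rangle<\tau$. "$H(r,d,p)$ is a clique" means all pairs among its $r$ vertices are edges; "independent set" means no pair is an edge. Let $c_p>0$ be defined by $\mathbb{P}(Z\le -c_p)=p$ for $Z\sim N(0,1)$, let $\varphi$ be the standard normal density and $a=\varphi(c_p)=e^{-c_p^2/2}/\sqrt{2\pi}$. For integers $s,t\ge1$, $c_{s,t}$ is the infimum over all finite $K_t$-free graphs $G$ of the probability that $s$ i.i.d. uniform vertices of $G$ (with replacement) form an independent set. A (multi)set $\{v_1,\dots,v_t\}$ is independent in $H$ if no two of the $v_i$ are adjacent. Logarithms are natural; $o(\cdot)$ is as $t\to\infty$ with $p,D,\delta,K$ fixed. *)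

theory Defs
  imports "HOL-Probability.Probability" "HOL-Library.Landau_Symbols"
begin

definition RdM :: "nat \<Rightarrow> (nat \<Rightarrow> real) measure" where
  "RdM d = PiM {..<d} (\<lambda>_. lborel)"

definition vnorm :: "nat \<Rightarrow> (nat \<Rightarrow> real) \<Rightarrow> real" where
  "vnorm d x = sqrt (\<Sum>k<d. (x k)^2)"

definition ip :: "nat \<Rightarrow> (nat \<Rightarrow> real) \<Rightarrow> (nat \<Rightarrow> real) \<Rightarrow> real" where
  "ip d x y = (\<Sum>k<d. x k * y k)"

definition unit_ball :: "nat \<Rightarrow> (nat \<Rightarrow> real) set" where
  "unit_ball d = {x \<in> space (RdM d). vnorm d x \<le> 1}"

text \<open>Uniform (normalized surface) measure on S^{d-1}: the cone measure, i.e. the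
  push-forward of the normalized Lebesgue measure on the unit ball under x / |x|.\<close>
definition sphere_measure :: "nat \<Rightarrow> (nat \<Rightarrow> real) measure" where
  "sphere_measure d = distr (uniform_measure (RdM d) (unit_ball d)) (RdM d)
      (\<lambda>x. \<lambda>k\<in>{..<d}. x k / vnorm d x)"

definition tau :: "nat \<Rightarrow> real \<Rightarrow> real" where
  "tau d p = (THE \<tau>. measure (sphere_measure d \<Otimes>\<^sub>M sphere_measure d)
      {z \<in> space (sphere_measure d \<Otimes>\<^sub>M sphere_measure d). ip d (fst z) (snd z) < \<tau>} = p)"

definition points_measure :: "nat \<Rightarrow> nat \<Rightarrow> (nat \<Rightarrow> nat \<Rightarrow> real) measure" where
  "points_measure M d = PiM {..<M} (\<lambda>_. sphere_measure d)"

definition adj :: "nat \<Rightarrow> real \<Rightarrow> (nat \<Rightarrow> nat \<Rightarrow> real) \<Rightarrow> nat \<Rightarrow> nat \<Rightarrow> bool" where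
  "adj d p U i j \<longleftrightarrow> i \<noteq> j \<and> ip d (U i) (U j) < tau d p"

definition prob_clique :: "nat \<Rightarrow> nat \<Rightarrow> real \<Rightarrow> real" where
  "prob_clique r d p = measure (points_measure r d)
     {U \<in> space (points_measure r d). \<forall>i<r. \<forall>j<r. i \<noteq> j \<longrightarrow> adj d p U i j}"

definition prob_indep :: "nat \<Rightarrow> nat \<Rightarrow> real \<Rightarrow> real" where
  "prob_indep r d p = measure (points_measure r d)
     {U \<in> space (points_measure r d). \<forall>i<r. \<forall>j<r. \<not> adj d p U i j}"

definition Kt_free :: "nat \<Rightarrow> nat \<Rightarrow> real \<Rightarrow> nat \<Rightarrow> (nat \<Rightarrow> nat \<Rightarrow> real) \<Rightarrow> bool" where
  "Kt_free M d p t U \<longleftrightarrow>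
     \<not> (\<exists>S \<subseteq> {..<M}. card S = t \<and> (\<forall>i\<in>S. \<forall>j\<in>S. i \<noteq> j \<longrightarrow> adj d p U i j))"

definition prob_Kt_free :: "nat \<Rightarrow> nat \<Rightarrow> real \<Rightarrow> nat \<Rightarrow> real" where
  "prob_Kt_free M d p t = measure (points_measure M d)
     {U \<in> space (points_measure M d). Kt_free M d p t U}"

definition vertices_measure :: "nat \<Rightarrow> nat \<Rightarrow> (nat \<Rightarrow> nat) measure" where
  "vertices_measure M t = PiM {..<t} (\<lambda>_. uniform_measure (count_space {..<M}) {..<M})"

definition prob_indep_tuple :: "nat \<Rightarrow> nat \<Rightarrow> real \<Rightarrow> nat \<Rightarrow> real" where
  "prob_indep_tuple M d p t =
     measure (points_measure M d \<Otimes>\<^sub>M vertices_measure M t)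
       {z \<in> space (points_measure M d \<Otimes>\<^sub>M vertices_measure M t).
          \<forall>i<t. \<forall>j<t. \<not> adj d p (fst z) (snd z i) (snd z j)}"

definition cp_const :: "real \<Rightarrow> real" where
  "cp_const p = (THE c. c > 0 \<and> measure (density lborel std_normal_density) {..-c} = p)"

definition a_p :: "real \<Rightarrow> real" where
  "a_p p = exp (- ((cp_const p) ^ 2) / 2) / sqrt (2 * pi)"

definition finite_graph :: "nat \<Rightarrow> (nat \<Rightarrow> nat \<Rightarrow> bool) \<Rightarrow> bool" where
  "finite_graph n E \<longleftrightarrow> n \<ge> 1 \<and> (\<forall>i j. E i j \<longrightarrow> i < n \<and> j < n)
      \<and> (\<forall>i j. E i j \<longrightarrow> E j i) \<and> (\<forall>i. \<not> E i i)"

definition graph_Kt_free :: "nat \<Rightarrow> (nat \<Rightarrow> nat \<Rightarrow> bool) \<Rightarrow> nat \<Rightarrow> bool" where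
  "graph_Kt_free n E t \<longleftrightarrow>
     \<not> (\<exists>S \<subseteq> {..<n}. card S = t \<and> (\<forall>i\<in>S. \<forall>j\<in>S. i \<noteq> j \<longrightarrow> E i j))"

definition graph_indep_prob :: "nat \<Rightarrow> (nat \<Rightarrow> nat \<Rightarrow> bool) \<Rightarrow> nat \<Rightarrow> real" where
  "graph_indep_prob n E s =
     real (card {v \<in> {..<s} \<rightarrow>\<^sub>E {..<n}. \<forall>i<s. \<forall>j<s. \<not> E (v i) (v j)}) / real n ^ s"

definition c_st :: "nat \<Rightarrow> nat \<Rightarrow> real" where
  "c_st s t = Inf {graph_indep_prob n E s | n E. finite_graph n E \<and> graph_Kt_free n E t}"

end

(*
  The K_t-free statement is a first-moment bound: the expected number of t-cliques,
  (M choose t) times the clique probability, is at most exp (m t^2) p^(t choose 2)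
  exp (- kap t^2 / D + K t^2 / D^2 + O(t)), which is exp (- delta t^2 + O(t)) by the
  choice of m.

  For the independence bound, group the tuples (v_1, ..., v_t) by the number r = theta t of
  distinct entries: there are at most M^r r^t of them and each is independent with
  probability prob_indep r d p. Since M^(r - t) <= (2 exp (- m t))^(t - r), the hypothesis on
  prob_indep makes every group at most exp (- (rate theta - delta) t^2 + O(t log t)), where
  rate is the function minimised in alpha.

  Every K_t-free outcome of H is admissible in the infimum defining c_{t,t}, so
  c_{t,t} P(H is K_t-free) is at most the expected independence probability of H, which is
  the same average over tuples as above; and P(H is K_t-free) tends to 1.
*)

theory Submission
  imports Defs "HOL-Real_Asymp.Real_Asymp"
begin

section \<open>Uniform points on the sphere\<close>

lemma borel_measurable_vnorm [measurable]:
  "vnorm d \<in> borel_measurable (PiM {..<d} (\<lambda>_. lborel))"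
  unfolding vnorm_def by measurable

lemma emeasure_RdM_box:
  assumes "a \<le> b"
  shows "emeasure (RdM d) ({..<d} \<rightarrow>\<^sub>E {a..b}) = ennreal (b - a) ^ d"
proof -
  have "product_sigma_finite (\<lambda>_::nat. lborel)"
    by (simp add: product_sigma_finite_def sigma_finite_lborel)
  from product_sigma_finite.emeasure_PiM[OF this, of "{..<d}" "\<lambda>_. {a..b}"] show ?thesis
    using assms
    by (simp add: RdM_def)
qed

lemma unit_ball_subset_box: "unit_ball d \<subseteq> {..<d} \<rightarrow>\<^sub>E {-1..1}"
proof
  fix x assume x: "x \<in> unit_ball d"
  then have "x \<in> {..<d} \<rightarrow>\<^sub>E UNIV" and norm: "(\<Sum>k<d. (x k)^2) \<le> 1"
    by (auto simp: unit_ball_def RdM_def space_PiM vnorm_def)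
  moreover have "(x k)^2 \<le> 1" if "k < d" for k
    using member_le_sum[of k "{..<d}" "\<lambda>k. (x k)^2"] that norm by simp
  then have "\<bar>x k\<bar> \<le> 1" if "k < d" for k
    using that by (simp flip: abs_square_le_1)
  ultimately show "x \<in> {..<d} \<rightarrow>\<^sub>E {-1..1}"
    by (auto simp: PiE_iff abs_le_iff)
qed

lemma box_subset_unit_ball:
  assumes "1 \<le> d"
  shows "{..<d} \<rightarrow>\<^sub>E {-1/d..1/d} \<subseteq> unit_ball d"
proof
  fix x assume x: "x \<in> {..<d} \<rightarrow>\<^sub>E {-1/d..1/d}"
  have "(x k)^2 \<le> 1/d" if "k < d" for k
  proof -
    have "x k \<in> {-1/d..1/d}" using x that by (auto simp: PiE_iff)
    then have "\<bar>x k\<bar> \<le> 1/d" by (auto simp: abs_le_iff)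
    then have "(x k)^2 \<le> (1/d)^2" by (metis abs_ge_zero power2_abs power_mono)
    also have "\<dots> \<le> 1/d" using assms by (simp add: power2_eq_square divide_simps)
    finally show ?thesis .
  qed
  then have "(\<Sum>k<d. (x k)^2) \<le> (\<Sum>k<d. 1/d)" by (intro sum_mono) auto
  also have "\<dots> = 1" using assms by simp
  finally show "x \<in> unit_ball d"
    using x by (auto simp: unit_ball_def vnorm_def RdM_def space_PiM PiE_iff)
qed

lemma prob_space_sphere_measure:
  assumes "1 \<le> d"
  shows "prob_space (sphere_measure d)"
proof -
  have ball: "unit_ball d \<in> sets (RdM d)"
    unfolding unit_ball_def RdM_def by measurable
  have box: "{..<d} \<rightarrow>\<^sub>E {a..b} \<in> sets (RdM d)" for a b :: real
    by (auto simp: RdM_def intro!: sets_PiM_I_finite)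
  have "0 < emeasure (RdM d) ({..<d} \<rightarrow>\<^sub>E {-1/d..1/d})"
    using assms by (simp add: emeasure_RdM_box ennreal_power)
  also have "\<dots> \<le> emeasure (RdM d) (unit_ball d)"
    using box_subset_unit_ball[OF assms] ball by (rule emeasure_mono)
  finally have pos: "emeasure (RdM d) (unit_ball d) \<noteq> 0" by simp
  have "emeasure (RdM d) (unit_ball d) \<le> emeasure (RdM d) ({..<d} \<rightarrow>\<^sub>E {-1..1})"
    using unit_ball_subset_box box by (rule emeasure_mono)
  then have fin: "emeasure (RdM d) (unit_ball d) \<noteq> \<infinity>"
    by (auto simp: emeasure_RdM_box top_unique power_eq_top_ennreal)
  interpret prob_space "uniform_measure (RdM d) (unit_ball d)"
    using pos fin by (rule prob_space_uniform_measure)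
  show ?thesis
    unfolding sphere_measure_def by (rule prob_space_distr) (simp add: RdM_def, measurable)
qed

lemma prob_space_points_measure: "1 \<le> d \<Longrightarrow> prob_space (points_measure M d)"
  unfolding points_measure_def by (intro prob_space_PiM prob_space_sphere_measure)

lemma sets_sphere_measure [measurable_cong]: "sets (sphere_measure d) = sets (RdM d)"
  by (simp add: sphere_measure_def)

lemma space_points_measure: "space (points_measure M d) = {..<M} \<rightarrow>\<^sub>E ({..<d} \<rightarrow>\<^sub>E UNIV)"
  using sets_eq_imp_space_eq[OF sets_sphere_measure]
  by (simp add: points_measure_def space_PiM RdM_def)

lemma measurable_points_coord [measurable]: "(\<lambda>U. U i k) \<in> borel_measurable (points_measure M d)"
proof (cases "i < M \<and> k < d")
  case True
  have "(\<lambda>U. U i) \<in> measurable (points_measure M d) (RdM d)"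
    using True measurable_component_singleton[of i "{..<M}" "\<lambda>_. sphere_measure d"]
    by (simp add: points_measure_def measurable_cong_sets[OF refl sets_sphere_measure])
  moreover have "(\<lambda>x. x k) \<in> borel_measurable (RdM d)"
    using True by (simp add: RdM_def)
  ultimately show ?thesis by measurable
next
  case False
  \<comment> \<open>outside the index sets the extensional space only contains junk values\<close>
  have "U i k = (if i < M then undefined else undefined k)" if "U \<in> space (points_measure M d)" for U
  proof (cases "i < M")
    case True
    then have "U i \<in> {..<d} \<rightarrow>\<^sub>E UNIV"
      using that by (simp add: space_points_measure PiE_iff)
    then show ?thesis using True False PiE_arb[of "U i" "{..<d}" _ k] by simp
  next
    case False
    then show ?thesis
      using that PiE_arb[of U "{..<M}" _ i] by (simp add: space_points_measure)
  qed
  then show ?thesis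
    by (subst measurable_cong[where g = "\<lambda>_. if i < M then undefined else undefined k"]) auto
qed

lemma measurable_adj [measurable]: "Measurable.pred (points_measure M d) (\<lambda>U. adj d p U i j)"
  unfolding adj_def ip_def by measurable

section \<open>Clique and independence events\<close>

lemma measure_points_reindex:
  assumes "1 \<le> d" "inj_on e {..<r}" "e ` {..<r} \<subseteq> {..<M}" "A \<in> sets (points_measure r d)"
  shows "measure (points_measure M d) {U \<in> space (points_measure M d). (\<lambda>j\<in>{..<r}. U (e j)) \<in> A}
       = measure (points_measure r d) A"
proof -
  let ?f = "\<lambda>U. \<lambda>j\<in>{..<r}. U (e j)"
  have f: "?f \<in> measurable (points_measure M d) (points_measure r d)"
    unfolding points_measure_def using assms(3)
    by (intro measurable_restrict measurable_component_singleton) auto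
  have "distr (points_measure M d) (points_measure r d) ?f = points_measure r d"
    unfolding points_measure_def using assms(3)
    by (intro distr_PiM_reindex prob_space_sphere_measure assms(1,2)) auto
  then show ?thesis
    using measure_distr[OF f assms(4)] by (simp add: vimage_def Int_def conj_commute)
qed

lemma measure_adj_const_on:
  assumes "1 \<le> d" "S \<subseteq> {..<M}"
  shows "measure (points_measure M d)
      {U \<in> space (points_measure M d). \<forall>a\<in>S. \<forall>b\<in>S. a \<noteq> b \<longrightarrow> adj d p U a b = c}
    = measure (points_measure (card S) d)
      {V \<in> space (points_measure (card S) d). \<forall>i<card S. \<forall>j<card S. i \<noteq> j \<longrightarrow> adj d p V i j = c}"
proof -
  define r where "r = card S"
  let ?A = "{V \<in> space (points_measure r d). \<forall>i<r. \<forall>j<r. i \<noteq> j \<longrightarrow> adj d p V i j = c}"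
  obtain e where "bij_betw e {..<r} S"
    using ex_bij_betw_nat_finite[of S] finite_subset[OF assms(2)] by (auto simp: lessThan_atLeast0 r_def)
  then have inj: "inj_on e {..<r}" and img: "e ` {..<r} = S"
    by (auto simp: bij_betw_def)
  have adj_iff: "(\<forall>a\<in>S. \<forall>b\<in>S. a \<noteq> b \<longrightarrow> adj d p U a b = c) \<longleftrightarrow> (\<lambda>j\<in>{..<r}. U (e j)) \<in> ?A"
    if U: "U \<in> space (points_measure M d)" for U
  proof -
    have "(\<lambda>j\<in>{..<r}. U (e j)) \<in> space (points_measure r d)"
      using U img assms(2) by (fastforce simp: space_points_measure PiE_iff)
    moreover have "adj d p (\<lambda>j\<in>{..<r}. U (e j)) i j = adj d p U (e i) (e j)" if "i < r" "j < r" for i j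
      using that inj_on_eq_iff[OF inj] by (simp add: adj_def)
    ultimately show ?thesis
      using inj_on_eq_iff[OF inj] by (auto simp flip: img)
  qed
  then have "{U \<in> space (points_measure M d). \<forall>a\<in>S. \<forall>b\<in>S. a \<noteq> b \<longrightarrow> adj d p U a b = c}
      = {U \<in> space (points_measure M d). (\<lambda>j\<in>{..<r}. U (e j)) \<in> ?A}"
    by (intro Collect_cong conj_cong refl adj_iff)
  moreover have "measure (points_measure M d) {U \<in> space (points_measure M d). (\<lambda>j\<in>{..<r}. U (e j)) \<in> ?A}
      = measure (points_measure r d) ?A"
    using img assms by (intro measure_points_reindex inj) auto
  ultimately show ?thesis
    by (simp only: r_def)
qed

definition clique_on :: "nat \<Rightarrow> nat \<Rightarrow> real \<Rightarrow> nat set \<Rightarrow> (nat \<Rightarrow> nat \<Rightarrow> real) set" where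
  "clique_on M d p S =
     {U \<in> space (points_measure M d). \<forall>a\<in>S. \<forall>b\<in>S. a \<noteq> b \<longrightarrow> adj d p U a b}"

definition indep_on :: "nat \<Rightarrow> nat \<Rightarrow> real \<Rightarrow> nat set \<Rightarrow> (nat \<Rightarrow> nat \<Rightarrow> real) set" where
  "indep_on M d p S = {U \<in> space (points_measure M d). \<forall>a\<in>S. \<forall>b\<in>S. \<not> adj d p U a b}"

lemma sets_clique_on [measurable]:
  "finite S \<Longrightarrow> clique_on M d p S \<in> sets (points_measure M d)"
  unfolding clique_on_def by measurable

lemma sets_indep_on [measurable]:
  "finite S \<Longrightarrow> indep_on M d p S \<in> sets (points_measure M d)"
  unfolding indep_on_def by measurable

lemma measure_clique_on:
  assumes "1 \<le> d" "S \<subseteq> {..<M}"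
  shows "measure (points_measure M d) (clique_on M d p S) = prob_clique (card S) d p"
  using measure_adj_const_on[OF assms, of p True] by (simp add: clique_on_def prob_clique_def)

lemma measure_indep_on:
  assumes "1 \<le> d" "S \<subseteq> {..<M}"
  shows "measure (points_measure M d) (indep_on M d p S) = prob_indep (card S) d p"
proof -
  have "\<not> adj d p U a b \<longleftrightarrow> (a \<noteq> b \<longrightarrow> adj d p U a b = False)" for U a b
    by (auto simp: adj_def)
  then show ?thesis
    unfolding indep_on_def prob_indep_def by (simp only:) (rule measure_adj_const_on[OF assms])
qed

lemma prob_clique_1: "1 \<le> d \<Longrightarrow> prob_clique 1 d p = 1"
  using prob_space.prob_space[OF prob_space_points_measure] by (simp add: prob_clique_def)

lemma Kt_free_set_eq_compl:
  "{U \<in> space (points_measure M d). Kt_free M d p t U}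
     = space (points_measure M d) - (\<Union>S\<in>{S. S \<subseteq> {..<M} \<and> card S = t}. clique_on M d p S)"
  by (auto simp: Kt_free_def clique_on_def)

lemma sets_Kt_free [measurable]:
  "{U \<in> space (points_measure M d). Kt_free M d p t U} \<in> sets (points_measure M d)"
proof -
  have "Kt_free M d p t U \<longleftrightarrow>
      \<not> (\<exists>S\<in>Pow {..<M}. card S = t \<and> (\<forall>i\<in>S. \<forall>j\<in>S. i \<noteq> j \<longrightarrow> adj d p U i j))" for U
    by (auto simp: Kt_free_def)
  then show ?thesis by simp
qed

lemma prob_Kt_free_ge:
  assumes "1 \<le> d"
  shows "1 - real (M choose t) * prob_clique t d p \<le> prob_Kt_free M d p t"
proof -
  interpret prob_space "points_measure M d"
    using assms by (rule prob_space_points_measure)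
  let ?SS = "{S. S \<subseteq> {..<M} \<and> card S = t}"
  have fin: "finite ?SS"
    by (rule finite_subset[of _ "Pow {..<M}"]) auto
  have events: "clique_on M d p S \<in> events" if "S \<in> ?SS" for S
    using that finite_subset[OF _ finite_lessThan] by auto
  have "prob (\<Union>S\<in>?SS. clique_on M d p S) \<le> (\<Sum>S\<in>?SS. prob (clique_on M d p S))"
    using fin events by (rule measure_UNION_le)
  also have "\<dots> = real (M choose t) * prob_clique t d p"
    using assms n_subsets[of "{..<M}" t] by (simp add: measure_clique_on)
  finally show ?thesis
    using fin unfolding prob_Kt_free_def Kt_free_set_eq_compl
    by (subst prob_compl) (auto intro!: sets.finite_UN events)
qed

lemma prob_Kt_free_le_1: "1 \<le> d \<Longrightarrow> prob_Kt_free M d p t \<le> 1"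
  unfolding prob_Kt_free_def by (rule prob_space.prob_le_1[OF prob_space_points_measure])

section \<open>Uniform vertex tuples and the constant c_{t,t}\<close>

lemma space_vertices_measure: "space (vertices_measure M t) = {..<t} \<rightarrow>\<^sub>E {..<M}"
  by (simp add: vertices_measure_def space_PiM)

lemma prob_space_vertices_measure: "1 \<le> M \<Longrightarrow> prob_space (vertices_measure M t)"
  unfolding vertices_measure_def by (intro prob_space_PiM prob_space_uniform_measure) auto

lemma singleton_eq_PiE: "v \<in> {..<t} \<rightarrow>\<^sub>E A \<Longrightarrow> {v} = PiE {..<t} (\<lambda>i. {v i})"
  by (intro PiE_singleton[symmetric]) (auto simp: PiE_iff)

lemma sets_vertices_singleton:
  assumes "v \<in> {..<t} \<rightarrow>\<^sub>E {..<M}"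
  shows "{v} \<in> sets (vertices_measure M t)"
  unfolding singleton_eq_PiE[OF assms] vertices_measure_def
  using assms by (intro sets_PiM_I_finite) (auto simp: PiE_iff)

lemma measure_vertices_singleton:
  assumes M: "1 \<le> M" and v: "v \<in> {..<t} \<rightarrow>\<^sub>E {..<M}"
  shows "measure (vertices_measure M t) {v} = 1 / real M ^ t"
proof -
  let ?U = "uniform_measure (count_space {..<M}) {..<M}"
  have "product_sigma_finite (\<lambda>_::nat. ?U)"
    unfolding product_sigma_finite_def using M
    by (auto intro!: prob_space_imp_sigma_finite prob_space_uniform_measure)
  from product_sigma_finite.emeasure_PiM[OF this, of "{..<t}" "\<lambda>i. {v i}"]
  have "emeasure (vertices_measure M t) {v} = (\<Prod>i<t. emeasure ?U {v i})"
    using v by (subst singleton_eq_PiE) (auto simp: vertices_measure_def PiE_iff)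
  also have "\<dots> = (\<Prod>i<t. ennreal (1 / real M))"
    using v M by (intro prod.cong refl)
      (auto simp: emeasure_uniform_measure PiE_iff ennreal_of_nat_eq_real_of_nat simp flip: divide_ennreal)
  finally show ?thesis
    by (simp add: measure_def ennreal_power power_one_over)
qed

definition mean_prob_indep :: "nat \<Rightarrow> nat \<Rightarrow> real \<Rightarrow> nat \<Rightarrow> real" where
  "mean_prob_indep M d p t =
     (\<Sum>v\<in>{..<t} \<rightarrow>\<^sub>E {..<M}. prob_indep (card (v ` {..<t})) d p) / real M ^ t"

lemma prob_indep_tuple_le_mean:
  assumes d: "1 \<le> d" and M: "1 \<le> M"
  shows "prob_indep_tuple M d p t \<le> mean_prob_indep M d p t"
proof -
  let ?P = "points_measure M d" and ?V = "vertices_measure M t"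
  let ?VV = "{..<t} \<rightarrow>\<^sub>E {..<M}" and ?A = "\<lambda>v. indep_on M d p (v ` {..<t})"
  interpret P: prob_space ?P using d by (rule prob_space_points_measure)
  interpret V: prob_space ?V using M by (rule prob_space_vertices_measure)
  interpret PV: pair_prob_space ?P ?V ..
  have fin: "finite ?VV" by (simp add: finite_PiE)
  have events: "?A v \<times> {v} \<in> PV.events" if "v \<in> ?VV" for v
    using that sets_vertices_singleton by auto
  have "prob_indep_tuple M d p t \<le> PV.prob (\<Union>v\<in>?VV. ?A v \<times> {v})"
    unfolding prob_indep_tuple_def using fin events
    by (intro PV.finite_measure_mono sets.finite_UN)
      (auto simp: space_pair_measure space_vertices_measure indep_on_def)
  also have "\<dots> \<le> (\<Sum>v\<in>?VV. PV.prob (?A v \<times> {v}))"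
    using fin events by (rule measure_UNION_le)
  also have "\<dots> = (\<Sum>v\<in>?VV. prob_indep (card (v ` {..<t})) d p * (1 / real M ^ t))"
  proof (intro sum.cong refl)
    fix v assume v: "v \<in> ?VV"
    then have "?A v \<in> P.events" "{v} \<in> V.events"
      using sets_vertices_singleton by auto
    then have "PV.prob (?A v \<times> {v}) = P.prob (?A v) * V.prob {v}"
      by (simp add: measure_def V.emeasure_pair_measure_Times enn2real_mult)
    then show "PV.prob (?A v \<times> {v}) = prob_indep (card (v ` {..<t})) d p * (1 / real M ^ t)"
      using v d M by (auto simp: measure_indep_on measure_vertices_singleton PiE_iff image_subset_iff)
  qed
  finally show ?thesis
    by (simp add: mean_prob_indep_def sum_divide_distrib)
qed

lemma card_PiE_card_image_le:
  "card {v \<in> {..<t} \<rightarrow>\<^sub>E {..<M}. card (v ` {..<t}) = r} \<le> M ^ r * r ^ t"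
proof -
  let ?SS = "{S. S \<subseteq> {..<M} \<and> card S = r}"
  have fin: "finite ?SS"
    by (rule finite_subset[of _ "Pow {..<M}"]) auto
  have "{v \<in> {..<t} \<rightarrow>\<^sub>E {..<M}. card (v ` {..<t}) = r} \<subseteq> (\<Union>S\<in>?SS. {..<t} \<rightarrow>\<^sub>E S)"
  proof
    fix v assume "v \<in> {v \<in> {..<t} \<rightarrow>\<^sub>E {..<M}. card (v ` {..<t}) = r}"
    then have "v ` {..<t} \<in> ?SS" and "v \<in> {..<t} \<rightarrow>\<^sub>E v ` {..<t}"
      by (auto simp: PiE_iff)
    then show "v \<in> (\<Union>S\<in>?SS. {..<t} \<rightarrow>\<^sub>E S)" by blast
  qed
  then have "card {v \<in> {..<t} \<rightarrow>\<^sub>E {..<M}. card (v ` {..<t}) = r} \<le> card (\<Union>S\<in>?SS. {..<t} \<rightarrow>\<^sub>E S)"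
    using fin by (intro card_mono) (auto intro!: finite_PiE intro: finite_subset)
  also have "\<dots> \<le> (\<Sum>S\<in>?SS. card ({..<t} \<rightarrow>\<^sub>E S))"
    using fin by (rule card_UN_le)
  also have "\<dots> = (M choose r) * r ^ t"
    using n_subsets[of "{..<M}" r] by (simp add: card_PiE)
  also have "\<dots> \<le> M ^ r * r ^ t"
    by (cases "r \<le> M") (simp_all add: binomial_le_pow binomial_eq_0)
  finally show ?thesis .
qed

lemma mean_prob_indep_le:
  assumes t: "1 \<le> t"
    and bound: "\<And>r. 1 \<le> r \<Longrightarrow> r \<le> t \<Longrightarrow> real M ^ r * real r ^ t / real M ^ t * prob_indep r d p \<le> E"
  shows "mean_prob_indep M d p t \<le> real t * E"
proof -
  let ?VV = "{..<t} \<rightarrow>\<^sub>E {..<M}" and ?c = "\<lambda>v. card (v ` {..<t})"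
  have range: "?c v \<in> {1..t}" if "v \<in> ?VV" for v
    using t card_image_le[of "{..<t}" v] by (auto simp: Suc_le_eq card_gt_0_iff)
  have "(\<Sum>v\<in>?VV. prob_indep (?c v) d p) = (\<Sum>r=1..t. \<Sum>v\<in>{v\<in>?VV. ?c v = r}. prob_indep (?c v) d p)"
    using range by (intro sum.group[symmetric]) (auto simp: finite_PiE)
  also have "\<dots> = (\<Sum>r=1..t. real (card {v\<in>?VV. ?c v = r}) * prob_indep r d p)"
    by simp
  also have "\<dots> \<le> (\<Sum>r=1..t. real M ^ r * real r ^ t * prob_indep r d p)"
    using card_PiE_card_image_le
    by (intro sum_mono mult_right_mono) (auto simp: prob_indep_def simp flip: of_nat_power of_nat_mult)
  finally have "mean_prob_indep M d p t \<le> (\<Sum>r=1..t. real M ^ r * real r ^ t * prob_indep r d p) / real M ^ t"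
    unfolding mean_prob_indep_def by (rule divide_right_mono) simp
  also have "\<dots> = (\<Sum>r=1..t. real M ^ r * real r ^ t / real M ^ t * prob_indep r d p)"
    by (simp add: sum_divide_distrib)
  also have "\<dots> \<le> real (card {1..t}) * E"
    by (rule sum_bounded_above) (rule bound; simp)
  also have "\<dots> = real t * E"
    by simp
  finally show ?thesis .
qed

lemma prob_indep_tuple_0:
  assumes "1 \<le> t"
  shows "prob_indep_tuple 0 d p t = 0"
proof -
  have "0 \<in> {..<t}"
    using assms by simp
  then have "space (vertices_measure 0 t) = {}"
    by (auto simp: space_vertices_measure PiE_eq_empty_iff)
  then show ?thesis
    by (simp add: prob_indep_tuple_def space_pair_measure)
qed

definition sphere_graph :: "nat \<Rightarrow> nat \<Rightarrow> real \<Rightarrow> (nat \<Rightarrow> nat \<Rightarrow> real) \<Rightarrow> nat \<Rightarrow> nat \<Rightarrow> bool" where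
  "sphere_graph M d p U i j \<longleftrightarrow> i < M \<and> j < M \<and> adj d p U i j"

lemma finite_graph_sphere_graph: "1 \<le> M \<Longrightarrow> finite_graph M (sphere_graph M d p U)"
  by (auto simp: finite_graph_def sphere_graph_def adj_def ip_def mult.commute)

lemma graph_Kt_free_sphere_graph: "graph_Kt_free M (sphere_graph M d p U) t \<longleftrightarrow> Kt_free M d p t U"
  unfolding graph_Kt_free_def Kt_free_def sphere_graph_def by blast

lemma c_st_le_graph_indep_prob:
  assumes "finite_graph n E" "graph_Kt_free n E t"
  shows "c_st t t \<le> graph_indep_prob n E t"
  unfolding c_st_def
  by (rule cInf_lower) (use assms in \<open>auto intro!: bdd_belowI[of _ 0] simp: graph_indep_prob_def\<close>)

lemma c_st_le_1:
  assumes "2 \<le> t"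
  shows "c_st t t \<le> 1"
proof -
  have "card S \<le> 1" if "S \<subseteq> {..<1}" for S :: "nat set"
    using card_mono[OF _ that] by simp
  then have "graph_Kt_free 1 (\<lambda>_ _. False) t"
    using assms unfolding graph_Kt_free_def by fastforce
  then have "c_st t t \<le> graph_indep_prob 1 (\<lambda>_ _. False) t"
    by (intro c_st_le_graph_indep_prob) (simp add: finite_graph_def)
  then show ?thesis
    by (simp add: graph_indep_prob_def card_PiE)
qed

lemma graph_indep_prob_sphere_graph:
  assumes "U \<in> space (points_measure M d)"
  shows "graph_indep_prob M (sphere_graph M d p U) t =
    (\<Sum>v\<in>{..<t} \<rightarrow>\<^sub>E {..<M}. indicator (indep_on M d p (v ` {..<t})) U) / real M ^ t"
proof -
  let ?VV = "{..<t} \<rightarrow>\<^sub>E {..<M}"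
  let ?indep = "\<lambda>v. \<forall>i<t. \<forall>j<t. \<not> sphere_graph M d p U (v i) (v j)"
  have iff: "?indep v \<longleftrightarrow> U \<in> indep_on M d p (v ` {..<t})" if "v \<in> ?VV" for v
    using that assms by (auto simp: sphere_graph_def indep_on_def PiE_iff)
  have "real (card {v \<in> ?VV. ?indep v}) = (\<Sum>v\<in>{v \<in> ?VV. ?indep v}. 1)"
    by simp
  also have "\<dots> = (\<Sum>v\<in>?VV. if ?indep v then 1 else 0)"
    by (rule sum.inter_filter) (simp add: finite_PiE)
  also have "\<dots> = (\<Sum>v\<in>?VV. indicator (indep_on M d p (v ` {..<t})) U)"
    using iff by (intro sum.cong) (auto simp: indicator_def)
  finally show ?thesis
    by (simp add: graph_indep_prob_def)
qed

lemma integral_graph_indep_prob: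
  assumes "1 \<le> d"
  shows "integrable (points_measure M d) (\<lambda>U. graph_indep_prob M (sphere_graph M d p U) t)"
    and "(\<integral>U. graph_indep_prob M (sphere_graph M d p U) t \<partial>points_measure M d) = mean_prob_indep M d p t"
proof -
  interpret prob_space "points_measure M d"
    using assms by (rule prob_space_points_measure)
  let ?VV = "{..<t} \<rightarrow>\<^sub>E {..<M}" and ?A = "\<lambda>v. indep_on M d p (v ` {..<t})"
  let ?f = "\<lambda>U. (\<Sum>v\<in>?VV. indicator (?A v) U) / real M ^ t :: real"
  have eq: "\<And>U. U \<in> space (points_measure M d) \<Longrightarrow> graph_indep_prob M (sphere_graph M d p U) t = ?f U"
    by (rule graph_indep_prob_sphere_graph)
  have ind: "integrable (points_measure M d) (indicator (?A v) :: _ \<Rightarrow> real)" for v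
    by (intro integrable_real_indicator sets_indep_on) (auto simp: less_top[symmetric])
  then have "integrable (points_measure M d) ?f"
    by (intro integrable_divide_zero Bochner_Integration.integrable_sum)
  then show "integrable (points_measure M d) (\<lambda>U. graph_indep_prob M (sphere_graph M d p U) t)"
    using Bochner_Integration.integrable_cong[where f = "\<lambda>U. graph_indep_prob M (sphere_graph M d p U) t"
        and g = ?f, OF refl eq] by blast
  have "(\<integral>U. ?f U \<partial>points_measure M d) = (\<Sum>v\<in>?VV. prob (?A v)) / real M ^ t"
    using ind by (simp add: integral_divide_zero Bochner_Integration.integral_sum)
  also have "\<dots> = mean_prob_indep M d p t"
  proof -
    have "prob (?A v) = prob_indep (card (v ` {..<t})) d p" if "v \<in> ?VV" for v
      using that assms by (intro measure_indep_on) (auto simp: PiE_iff)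
    then show ?thesis
      by (simp add: mean_prob_indep_def)
  qed
  finally show "(\<integral>U. graph_indep_prob M (sphere_graph M d p U) t \<partial>points_measure M d) = mean_prob_indep M d p t"
    using Bochner_Integration.integral_cong[where f = "\<lambda>U. graph_indep_prob M (sphere_graph M d p U) t"
        and g = ?f, OF refl eq] by simp
qed

lemma prob_Kt_free_mult_c_st_le:
  assumes d: "1 \<le> d" and M: "1 \<le> M"
  shows "prob_Kt_free M d p t * c_st t t \<le> mean_prob_indep M d p t"
proof -
  interpret prob_space "points_measure M d"
    using d by (rule prob_space_points_measure)
  let ?F = "{U \<in> space (points_measure M d). Kt_free M d p t U}"
  let ?g = "\<lambda>U. graph_indep_prob M (sphere_graph M d p U) t"
  have "?F \<inter> space (points_measure M d) = ?F"
    by blast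
  then have "prob_Kt_free M d p t * c_st t t = (\<integral>U. c_st t t * indicator ?F U \<partial>points_measure M d)"
    by (simp add: prob_Kt_free_def)
  also have "\<dots> \<le> (\<integral>U. ?g U \<partial>points_measure M d)"
  proof (rule integral_mono)
    fix U assume "U \<in> space (points_measure M d)"
    then show "c_st t t * indicator ?F U \<le> ?g U"
      using M c_st_le_graph_indep_prob[OF finite_graph_sphere_graph graph_Kt_free_sphere_graph[THEN iffD2]]
      by (auto simp: indicator_def graph_indep_prob_def)
  qed (auto intro!: integrable_mult_right integrable_real_indicator integral_graph_indep_prob d
            simp: less_top[symmetric])
  also have "\<dots> = mean_prob_indep M d p t"
    using d by (rule integral_graph_indep_prob)
  finally show ?thesis .
qed

section \<open>Asymptotics in dimension D^2 t^2\<close>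

lemma power_eq_exp_ln: "0 < x \<Longrightarrow> x ^ n = exp (ln x * real n)"
  by (metis exp_ln exp_of_nat_mult mult.commute)

lemma real_choose_two: "real (n choose 2) = real n * (real n - 1) / 2"
proof (induction n)
  case (Suc n)
  have "Suc n choose 2 = n + (n choose 2)"
    by (simp add: numeral_2_eq_2)
  then show ?case
    using Suc by (simp add: field_simps)
qed simp

lemma real_choose_three: "real (n choose 3) = real n * (real n - 1) * (real n - 2) / 6"
proof (induction n)
  case (Suc n)
  have "Suc n choose 3 = (n choose 2) + (n choose 3)"
    by (simp add: numeral_3_eq_3 numeral_2_eq_2)
  then show ?case
    using Suc by (simp add: real_choose_two field_simps)
qed simp

locale sphere_rgg_estimates =
  fixes p \<delta> K D a :: real and d :: "nat \<Rightarrow> nat"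
  assumes p_pos: "0 < p" and p_less_half: "p < 1/2" and delta_pos: "0 < \<delta>"
    and D_pos: "0 < D" and a_nonneg: "0 \<le> a"
    and d_eq: "real (d t) = D^2 * (real t)^2"
    and clique_bound: "\<lbrakk>2 \<le> t; 1 \<le> r; r \<le> t\<rbrakk> \<Longrightarrow> prob_clique r (d t) p \<le> p ^ (r choose 2) *
        exp (- (a ^ 3 / (p ^ 3 * sqrt (real (d t)))) * real (r choose 3)
             + K * real r ^ 3 / (D * sqrt (real (d t))))"
    and indep_bound: "\<lbrakk>2 \<le> t; 1 \<le> r; r \<le> t\<rbrakk> \<Longrightarrow> prob_indep r (d t) p \<le> (1 - p) ^ (r choose 2) *
        exp ((a ^ 3 / ((1 - p) ^ 3 * sqrt (real (d t)))) * real (r choose 3)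
             + K * real r ^ 3 / (D * sqrt (real (d t))))"
begin

definition kap :: real where "kap = a ^ 3 / (6 * p ^ 3)"
definition lam :: real where "lam = a ^ 3 / (6 * (1 - p) ^ 3)"
definition m :: real where "m = - ln p / 2 + kap / D - K / D^2 - \<delta>"
definition M :: "nat \<Rightarrow> nat" where "M t = nat \<lfloor>exp (m * real t)\<rfloor>"
definition rate :: "real \<Rightarrow> real" where
  "rate \<theta> = (1 - \<theta>) * (- ln p / 2 + kap / D) - \<theta>^2 / 2 * ln (1 - p) - lam / D * \<theta>^3 - (2 - \<theta>) * K / D^2"
definition \<alpha> :: real where "\<alpha> = Inf (rate ` {0..1}) - \<delta>"

lemma sqrt_d: "sqrt (real (d t)) = D * real t"
  using D_pos by (simp add: d_eq real_sqrt_mult)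

lemma d_ge_1:
  assumes "1 \<le> t"
  shows "1 \<le> d t"
proof -
  have "0 < real (d t)"
    using assms D_pos by (simp add: d_eq)
  then show ?thesis by simp
qed

text \<open>\<open>K \<ge> 0\<close> is forced by the hypothesis at \<open>r = 1\<close>, where the clique probability is 1.\<close>

lemma K_nonneg: "0 \<le> K"
proof -
  have "1 \<le> exp (K / (D * (D * 2)))"
    using clique_bound[of 2 1] prob_clique_1[OF d_ge_1[of 2]] by (simp add: sqrt_d binomial_eq_0)
  then have "0 \<le> K / (D * (D * 2))"
    by simp
  then show ?thesis
    using D_pos mult_pos_pos[OF D_pos D_pos] by (auto simp: zero_le_divide_iff)
qed

lemma kap_nonneg: "0 \<le> kap"
  using a_nonneg p_pos by (simp add: kap_def)

lemma lam_nonneg: "0 \<le> lam"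
  using a_nonneg p_less_half by (simp add: lam_def)

lemma prob_clique_le_exp:
  assumes t: "2 \<le> t"
  shows "prob_clique t (d t) p \<le>
    exp ((ln p / 2 - kap / D + K / D^2) * (real t)^2 + (- ln p / 2 + 3 * kap / D) * real t)"
proof -
  have "prob_clique t (d t) p \<le> exp (ln p * real (t choose 2)) *
      exp (- (a ^ 3 / (p ^ 3 * (D * real t))) * real (t choose 3) + K * real t ^ 3 / (D * (D * real t)))"
    using clique_bound[of t t] t p_pos by (simp add: sqrt_d power_eq_exp_ln)
  also have "\<dots> = exp ((ln p / 2 - kap / D + K / D^2) * (real t)^2
      + (- ln p / 2 + 3 * kap / D) * real t - 2 * kap / D)"
    using t D_pos p_pos unfolding exp_add[symmetric]
    by (simp add: real_choose_two real_choose_three kap_def field_simps power2_eq_square power3_eq_cube)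
  also have "\<dots> \<le> exp ((ln p / 2 - kap / D + K / D^2) * (real t)^2 + (- ln p / 2 + 3 * kap / D) * real t)"
    using kap_nonneg D_pos by simp
  finally show ?thesis .
qed

lemma M_le_exp: "real (M t) \<le> exp (m * real t)"
  and M_gt_exp_minus_1: "exp (m * real t) - 1 < real (M t)"
proof -
  have "real (M t) = real_of_int \<lfloor>exp (m * real t)\<rfloor>"
    unfolding M_def by simp
  then show "real (M t) \<le> exp (m * real t)" "exp (m * real t) - 1 < real (M t)"
    by linarith+
qed

lemma M_ge_half_exp: "1 \<le> M t \<Longrightarrow> exp (m * real t) / 2 \<le> real (M t)"
  using M_gt_exp_minus_1[of t] by linarith

lemma choose_mul_prob_clique_le:
  assumes "2 \<le> t"
  shows "real (M t choose t) * prob_clique t (d t) p \<le> exp (- \<delta> * (real t)^2 + (- ln p / 2 + 3 * kap / D) * real t)"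
proof -
  have "M t choose t \<le> M t ^ t"
    by (cases "t \<le> M t") (simp_all add: binomial_le_pow binomial_eq_0)
  then have "real (M t choose t) \<le> real (M t) ^ t"
    by (metis of_nat_le_iff of_nat_power)
  also have "\<dots> \<le> exp (m * real t) ^ t"
    by (intro power_mono M_le_exp) simp
  also have "\<dots> = exp (m * (real t)^2)"
    by (simp add: exp_of_nat_mult[symmetric] power2_eq_square mult_ac)
  finally have "real (M t choose t) * prob_clique t (d t) p \<le> exp (m * (real t)^2) *
      exp ((ln p / 2 - kap / D + K / D^2) * (real t)^2 + (- ln p / 2 + 3 * kap / D) * real t)"
    using prob_clique_le_exp[OF assms] by (intro mult_mono) (auto simp: prob_clique_def)
  also have "\<dots> = exp (- \<delta> * (real t)^2 + (- ln p / 2 + 3 * kap / D) * real t)"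
    unfolding exp_add[symmetric] by (simp add: m_def algebra_simps)
  finally show ?thesis .
qed

lemma prob_Kt_free_tendsto_1: "((\<lambda>t. prob_Kt_free (M t) (d t) p t) \<longlongrightarrow> 1) sequentially"
proof -
  define c where "c = - ln p / 2 + 3 * kap / D"
  let ?lower = "\<lambda>t::nat. 1 - exp (- \<delta> * (real t)^2 + c * real t)"
  have "((\<lambda>t::nat. exp (- \<delta> * (real t)^2 + c * real t)) \<longlongrightarrow> 0) sequentially"
    using delta_pos by real_asymp
  then have lower_lim: "(?lower \<longlongrightarrow> 1) sequentially"
    using tendsto_diff[OF tendsto_const, of _ 0 sequentially 1] by simp
  have lower: "\<forall>\<^sub>F t in sequentially. ?lower t \<le> prob_Kt_free (M t) (d t) p t"
    using eventually_ge_at_top[of 2]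
  proof eventually_elim
    case (elim t)
    then have "1 \<le> d t"
      by (intro d_ge_1) simp
    then show ?case
      using prob_Kt_free_ge[where M = "M t" and t = t and p = p] choose_mul_prob_clique_le[OF elim]
      unfolding c_def by fastforce
  qed
  have upper: "\<forall>\<^sub>F t in sequentially. prob_Kt_free (M t) (d t) p t \<le> 1"
    using eventually_ge_at_top[of 1] by eventually_elim (intro prob_Kt_free_le_1 d_ge_1)
  show ?thesis
    by (rule tendsto_sandwich[OF lower upper lower_lim tendsto_const])
qed

lemma alpha_le_rate:
  assumes "0 \<le> \<theta>" "\<theta> \<le> 1"
  shows "\<alpha> \<le> rate \<theta> - \<delta>"
proof -
  have "bdd_below (rate ` {0..1})"
    unfolding rate_def using D_pos
    by (intro bounded_imp_bdd_below compact_imp_bounded compact_continuous_image continuous_intros) auto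
  then show ?thesis
    using assms by (auto simp: \<alpha>_def intro: cInf_lower)
qed

lemma exponent_le_neg_alpha:
  assumes "0 \<le> \<theta>" "\<theta> \<le> 1"
  shows "- m * (1 - \<theta>) + ln (1 - p) * \<theta>^2 / 2 + (lam / D + K / D^2) * \<theta>^3 \<le> - \<alpha>"
proof -
  have "\<theta>^3 \<le> 1"
    using assms by (simp add: power_le_one)
  then have "0 \<le> K / D^2 * (1 - \<theta>^3) + \<theta> * \<delta>"
    using K_nonneg assms delta_pos by simp
  moreover have "- (rate \<theta> - \<delta>) - (- m * (1 - \<theta>) + ln (1 - p) * \<theta>^2 / 2 + (lam / D + K / D^2) * \<theta>^3)
      = K / D^2 * (1 - \<theta>^3) + \<theta> * \<delta>"
    using D_pos by (simp add: rate_def m_def field_simps)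
  ultimately show ?thesis
    using alpha_le_rate[OF assms] by linarith
qed

lemma prob_indep_le_exp:
  assumes t: "2 \<le> t" and r: "1 \<le> r" "r \<le> t"
  shows "prob_indep r (d t) p \<le>
    exp (ln (1 - p) * ((real r)^2 - real t) / 2 + (lam / D + K / D^2) * real r ^ 3 / real t)"
proof -
  have ln_neg: "ln (1 - p) < 0"
    using p_pos p_less_half by simp
  have "ln (1 - p) * real (r choose 2) \<le> ln (1 - p) * ((real r)^2 - real t) / 2"
    using ln_neg r by (simp add: real_choose_two field_simps power2_eq_square)
  moreover have "a ^ 3 / ((1 - p) ^ 3 * (D * real t)) * real (r choose 3) \<le> lam / D * real r ^ 3 / real t"
  proof -
    have "real r * (real r - 1) * (real r - 2) \<le> real r ^ 3"
      using r by (simp add: algebra_simps power3_eq_cube)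
    then have "lam * (real r * (real r - 1) * (real r - 2)) / (D * real t) \<le> lam * real r ^ 3 / (D * real t)"
      using lam_nonneg D_pos t by (intro divide_right_mono mult_left_mono) auto
    then show ?thesis
      using p_less_half D_pos t by (simp add: real_choose_three lam_def field_simps)
  qed
  moreover have "K * real r ^ 3 / (D * (D * real t)) = K / D^2 * real r ^ 3 / real t"
    by (simp add: power2_eq_square)
  moreover have "(lam / D + K / D^2) * real r ^ 3 / real t
      = lam / D * real r ^ 3 / real t + K / D^2 * real r ^ 3 / real t"
    by (simp add: distrib_right add_divide_distrib)
  ultimately have "ln (1 - p) * real (r choose 2) +
      (a ^ 3 / ((1 - p) ^ 3 * (D * real t)) * real (r choose 3) + K * real r ^ 3 / (D * (D * real t)))
    \<le> ln (1 - p) * ((real r)^2 - real t) / 2 + (lam / D + K / D^2) * real r ^ 3 / real t"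
    by linarith
  moreover have "prob_indep r (d t) p \<le> exp (ln (1 - p) * real (r choose 2) +
      (a ^ 3 / ((1 - p) ^ 3 * (D * real t)) * real (r choose 3) + K * real r ^ 3 / (D * (D * real t))))"
    using indep_bound[OF assms] p_less_half by (simp add: sqrt_d power_eq_exp_ln exp_add)
  ultimately show ?thesis
    by (meson exp_le_cancel_iff order_trans)
qed

lemma M_power_ratio_le:
  assumes "1 \<le> M t" "r \<le> t"
  shows "real (M t) ^ r / real (M t) ^ t \<le> exp (ln 2 * (real t - real r) - m * real t * (real t - real r))"
proof -
  have "real (M t) ^ r / real (M t) ^ t = (1 / real (M t)) ^ (t - r)"
    using assms by (simp add: power_diff power_one_over)
  also have "\<dots> \<le> (2 / exp (m * real t)) ^ (t - r)"
    using M_ge_half_exp[OF assms(1)] assms(1) by (intro power_mono) (auto simp: field_simps)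
  also have "\<dots> = exp (ln 2 - m * real t) ^ (t - r)"
    by (simp add: exp_diff)
  also have "\<dots> = exp ((ln 2 - m * real t) * real (t - r))"
    by (metis exp_of_nat_mult mult.commute)
  also have "\<dots> = exp (ln 2 * (real t - real r) - m * real t * (real t - real r))"
    using assms by (simp add: of_nat_diff algebra_simps)
  finally show ?thesis .
qed

lemma indep_exponent_le:
  assumes r: "1 \<le> r" "r \<le> t"
  shows "- m * real t * (real t - real r) + ln (1 - p) * (real r)^2 / 2
      + (lam / D + K / D^2) * real r ^ 3 / real t \<le> - \<alpha> * (real t)^2"
proof -
  define \<theta> where "\<theta> = real r / real t"
  have \<theta>: "0 \<le> \<theta>" "\<theta> \<le> 1" and r_eq: "real r = \<theta> * real t"
    using r by (auto simp: \<theta>_def)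
  have "- m * real t * (real t - real r) + ln (1 - p) * (real r)^2 / 2
      + (lam / D + K / D^2) * real r ^ 3 / real t
    = (real t)^2 * (- m * (1 - \<theta>) + ln (1 - p) * \<theta>^2 / 2 + (lam / D + K / D^2) * \<theta>^3)"
    unfolding r_eq using r by (simp add: field_simps power2_eq_square power3_eq_cube)
  also have "\<dots> \<le> (real t)^2 * - \<alpha>"
    using \<theta> by (intro mult_left_mono exponent_le_neg_alpha) auto
  finally show ?thesis
    by (simp add: mult.commute)
qed

lemma indep_term_le:
  assumes t: "2 \<le> t" and r: "1 \<le> r" "r \<le> t" and M: "1 \<le> M t"
  shows "real (M t) ^ r * real r ^ t / real (M t) ^ t * prob_indep r (d t) p
    \<le> exp (- \<alpha> * (real t)^2 + (ln 2 - ln (1 - p) / 2) * real t + real t * ln (real t))"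
proof -
  have "real r ^ t \<le> real t ^ t"
    using r by (intro power_mono) auto
  also have "\<dots> = exp (real t * ln (real t))"
    using t by (simp add: power_eq_exp_ln mult.commute)
  finally have r_power: "real r ^ t \<le> exp (real t * ln (real t))" .
  have "real (M t) ^ r * real r ^ t / real (M t) ^ t * prob_indep r (d t) p
      = real (M t) ^ r / real (M t) ^ t * real r ^ t * prob_indep r (d t) p"
    by simp
  also have "\<dots> \<le> exp (ln 2 * (real t - real r) - m * real t * (real t - real r)) * exp (real t * ln (real t))
        * exp (ln (1 - p) * ((real r)^2 - real t) / 2 + (lam / D + K / D^2) * real r ^ 3 / real t)"
    using M_power_ratio_le[OF M r(2)] r_power prob_indep_le_exp[OF t r]
    by (intro mult_mono) (auto simp: prob_indep_def)
  also have "\<dots> = exp (ln 2 * (real t - real r) - m * real t * (real t - real r) + real t * ln (real t)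
      + (ln (1 - p) * ((real r)^2 - real t) / 2 + (lam / D + K / D^2) * real r ^ 3 / real t))"
    by (simp add: exp_add)
  also have "\<dots> \<le> exp (- \<alpha> * (real t)^2 + (ln 2 - ln (1 - p) / 2) * real t + real t * ln (real t))"
  proof -
    have "ln 2 * (real t - real r) \<le> ln 2 * real t"
      by simp
    moreover have "ln (1 - p) * ((real r)^2 - real t) / 2
        = ln (1 - p) * (real r)^2 / 2 - ln (1 - p) / 2 * real t"
      by (simp add: field_simps)
    moreover have "(ln 2 - ln (1 - p) / 2) * real t = ln 2 * real t - ln (1 - p) / 2 * real t"
      by (simp add: algebra_simps)
    ultimately show ?thesis
      unfolding exp_le_cancel_iff using indep_exponent_le[OF r] by linarith
  qed
  finally show ?thesis .
qed

text \<open>The terms come from summing over \<open>r \<le> t\<close>, from \<open>r^t \<le> t^t\<close>, and from \<open>2^t\<close> together with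
  the slack \<open>(1 - p)^(-t/2)\<close> in \<open>prob_indep_le_exp\<close>.\<close>

definition indep_error :: "nat \<Rightarrow> real" where
  "indep_error t = ln (real t) + (ln 2 - ln (1 - p) / 2) * real t + real t * ln (real t)"

lemma indep_error_smallo: "indep_error \<in> o(\<lambda>t. (real t)^2)"
  unfolding indep_error_def by real_asymp

lemma indep_error_nonneg:
  assumes "1 \<le> t"
  shows "0 \<le> indep_error t"
proof -
  have "ln (1 - p) < 0"
    using p_pos p_less_half by simp
  then have "0 \<le> ln 2 - ln (1 - p) / 2"
    using ln_gt_zero[of "2::real"] by linarith
  then show ?thesis
    using assms by (simp add: indep_error_def)
qed

lemma mean_prob_indep_le_exp:
  assumes t: "2 \<le> t" and M: "1 \<le> M t"
  shows "mean_prob_indep (M t) (d t) p t \<le> exp (- \<alpha> * (real t)^2 + indep_error t)"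
proof -
  have "mean_prob_indep (M t) (d t) p t
      \<le> real t * exp (- \<alpha> * (real t)^2 + (ln 2 - ln (1 - p) / 2) * real t + real t * ln (real t))"
    using t by (intro mean_prob_indep_le indep_term_le M) auto
  also have "\<dots> = exp (ln (real t))
      * exp (- \<alpha> * (real t)^2 + (ln 2 - ln (1 - p) / 2) * real t + real t * ln (real t))"
    using t by simp
  also have "\<dots> = exp (- \<alpha> * (real t)^2 + indep_error t)"
    by (simp add: indep_error_def flip: exp_add)
  finally show ?thesis .
qed

lemma alpha_neg_if_M_eq_0:
  assumes "1 \<le> t" "M t = 0"
  shows "\<alpha> < 0"
proof -
  have "exp (m * real t) < 1"
    using M_gt_exp_minus_1[of t] assms(2) by simp
  then have "m < 0"
    using assms(1) by (simp add: mult_less_0_iff)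
  moreover have "\<alpha> \<le> m - K / D^2"
    using alpha_le_rate[of 0] by (simp add: rate_def m_def)
  moreover have "0 \<le> K / D^2"
    using K_nonneg by simp
  ultimately show ?thesis
    by linarith
qed

lemma prob_indep_tuple_le_exp:
  assumes "2 \<le> t"
  shows "prob_indep_tuple (M t) (d t) p t \<le> exp (- \<alpha> * (real t)^2 + indep_error t)"
proof (cases "M t = 0")
  case True
  then show ?thesis
    using assms by (simp add: prob_indep_tuple_0)
next
  case False
  then have "prob_indep_tuple (M t) (d t) p t \<le> mean_prob_indep (M t) (d t) p t"
    using assms by (intro prob_indep_tuple_le_mean d_ge_1) auto
  also have "\<dots> \<le> exp (- \<alpha> * (real t)^2 + indep_error t)"
    using assms False by (intro mean_prob_indep_le_exp) auto
  finally show ?thesis .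
qed

lemma c_st_le_exp:
  assumes t: "2 \<le> t" and Kt_free: "1/2 < prob_Kt_free (M t) (d t) p t"
  shows "c_st t t \<le> exp (- \<alpha> * (real t)^2 + (indep_error t + ln 2))"
proof (cases "M t = 0")
  case True
  then have "\<alpha> * (real t)^2 \<le> 0"
    using alpha_neg_if_M_eq_0[of t] t by (simp add: mult_nonpos_nonneg)
  then have "0 \<le> - \<alpha> * (real t)^2 + (indep_error t + ln 2)"
    using indep_error_nonneg[of t] t ln_gt_zero[of "2::real"] by linarith
  then show ?thesis
    using c_st_le_1[OF t] by (meson one_le_exp_iff order_trans)
next
  case False
  let ?B = "exp (- \<alpha> * (real t)^2 + indep_error t)"
  have "prob_Kt_free (M t) (d t) p t * c_st t t \<le> mean_prob_indep (M t) (d t) p t"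
    using t False by (intro prob_Kt_free_mult_c_st_le d_ge_1) auto
  also have "\<dots> \<le> ?B"
    using t False by (intro mean_prob_indep_le_exp) auto
  finally have Kt_free_c_st: "prob_Kt_free (M t) (d t) p t * c_st t t \<le> ?B" .
  have "c_st t t \<le> 2 * ?B"
  proof (cases "c_st t t \<le> 0")
    case True
    moreover have "0 < ?B" by simp
    ultimately show ?thesis by linarith
  next
    case False
    then have "1/2 * c_st t t \<le> prob_Kt_free (M t) (d t) p t * c_st t t"
      using Kt_free by (intro mult_right_mono) auto
    then show ?thesis
      using Kt_free_c_st by linarith
  qed
  moreover have "exp (- \<alpha> * (real t)^2 + (indep_error t + ln 2)) = ?B * exp (ln 2)"
    by (simp only: exp_add[symmetric] add.assoc)
  ultimately show ?thesis
    by simp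
qed

lemma prob_indep_tuple_asymp:
  "\<exists>f. f \<in> o(\<lambda>t. (real t)^2) \<and>
     (\<forall>\<^sub>F t in sequentially. prob_indep_tuple (M t) (d t) p t \<le> exp (- \<alpha> * (real t)^2 + f t))"
proof (intro exI conjI)
  show "indep_error \<in> o(\<lambda>t. (real t)^2)"
    by (rule indep_error_smallo)
  show "\<forall>\<^sub>F t in sequentially. prob_indep_tuple (M t) (d t) p t \<le> exp (- \<alpha> * (real t)^2 + indep_error t)"
    using eventually_ge_at_top[of 2] by eventually_elim (rule prob_indep_tuple_le_exp)
qed

lemma c_st_asymp:
  "\<exists>g. g \<in> o(\<lambda>t. (real t)^2) \<and> (\<forall>\<^sub>F t in sequentially. c_st t t \<le> exp (- \<alpha> * (real t)^2 + g t))"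
proof (intro exI conjI)
  show "(\<lambda>t. indep_error t + ln 2) \<in> o(\<lambda>t. (real t)^2)"
    unfolding indep_error_def by real_asymp
  show "\<forall>\<^sub>F t in sequentially. c_st t t \<le> exp (- \<alpha> * (real t)^2 + (indep_error t + ln 2))"
  proof -
    have "\<forall>\<^sub>F t in sequentially. 1/2 < prob_Kt_free (M t) (d t) p t"
      by (rule order_tendstoD(1)[OF prob_Kt_free_tendsto_1]) simp
    with eventually_ge_at_top[of 2] show ?thesis
      by eventually_elim (rule c_st_le_exp)
  qed
qed

end

theorem theorem2p3:
  fixes p \<delta> D0 K D :: real
  assumes p_pos: "0 < p" and p_half: "p < 1/2"
    and delta_pos: "\<delta> > 0"
    and D0_pos: "D0 > 0"
    and bounds: "\<forall>t::nat. t \<ge> 2 \<longrightarrow> (\<forall>D'::real. D' \<ge> D0 \<longrightarrow> (\<forall>d::nat. real d = D'^2 * (real t)^2 \<longrightarrow>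
        (\<forall>r::nat. 1 \<le> r \<and> r \<le> t \<longrightarrow>
          prob_clique r d p \<le> p ^ (r choose 2) *
            exp (- (a_p p ^ 3 / (p ^ 3 * sqrt (real d))) * real (r choose 3)
                 + K * real r ^ 3 / (D' * sqrt (real d)))
        \<and> prob_indep r d p \<le> (1 - p) ^ (r choose 2) *
            exp ((a_p p ^ 3 / ((1 - p) ^ 3 * sqrt (real d))) * real (r choose 3)
                 + K * real r ^ 3 / (D' * sqrt (real d))))))"
    and D_ge: "D \<ge> D0"
    and D_sq: "D^2 \<in> \<nat>"
  defines "d \<equiv> (\<lambda>t::nat. nat \<lfloor>D^2 * (real t)^2\<rfloor>)"
    and "kap \<equiv> a_p p ^ 3 / (6 * p ^ 3)"
    and "lam \<equiv> a_p p ^ 3 / (6 * (1 - p) ^ 3)"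
  defines "m \<equiv> - ln p / 2 + kap / D - K / D^2 - \<delta>"
  defines "M \<equiv> (\<lambda>t::nat. nat \<lfloor>exp (m * real t)\<rfloor>)"
    and "\<alpha> \<equiv> Inf ((\<lambda>\<theta>::real. (1 - \<theta>) * (- ln p / 2 + kap / D) - \<theta>^2 / 2 * ln (1 - p)
                 - lam / D * \<theta>^3 - (2 - \<theta>) * K / D^2) ` {0..1}) - \<delta>"
  shows "((\<lambda>t. prob_Kt_free (M t) (d t) p t) \<longlongrightarrow> 1) sequentially
    \<and> (\<exists>f :: nat \<Rightarrow> real. f \<in> o(\<lambda>t. (real t)^2) \<and>
         (\<forall>\<^sub>F t in sequentially.
            prob_indep_tuple (M t) (d t) p t \<le> exp (- \<alpha> * (real t)^2 + f t)))
    \<and> (\<exists>g :: nat \<Rightarrow> real. g \<in> o(\<lambda>t. (real t)^2) \<and>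
         (\<forall>\<^sub>F t in sequentially. c_st t t \<le> exp (- \<alpha> * (real t)^2 + g t)))"
proof -
  obtain n :: nat where n: "D^2 = real n"
    using D_sq by (auto elim: Nats_cases)
  have d_eq: "real (d t) = D^2 * (real t)^2" for t
  proof -
    have "d t = n * t^2"
      unfolding d_def n by (metis floor_of_nat nat_int of_nat_mult of_nat_power)
    then show ?thesis
      using n by simp
  qed
  interpret S: sphere_rgg_estimates p \<delta> K D "a_p p" d
    using p_pos p_half delta_pos D_ge D0_pos d_eq bounds
    by unfold_locales (auto simp: a_p_def)
  have "S.M = M" "S.\<alpha> = \<alpha>"
    by (simp_all add: fun_eq_iff S.M_def M_def S.m_def m_def S.kap_def kap_def
        S.\<alpha>_def \<alpha>_def S.rate_def[abs_def] S.lam_def lam_def)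
  then show ?thesis
    using S.prob_Kt_free_tendsto_1 S.prob_indep_tuple_asymp S.c_st_asymp by simp
qed

end
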